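(* Let $I_0,I_1$ denote the modified Bessel functions of the first kind of orders $0$ and $1$, and let $\Phi(x)=e^{-x}\left[I_0(x)+I_1(x)\right]$. Then for all real $r\ge 0$, $$\Phi(2r)=e^{-2r}\left[I_0(2r)+I_1(2r)\right]\ge \frac{\Gamma(2r+1)}{\Gamma^2(r+1)}\,2^{-2r}.$$ *)

theory Defs
  imports "HOL-Analysis.Analysis"
begin

definition besselI :: "nat \<Rightarrow> real \<Rightarrow> real" where
  "besselI n x = (\<Sum>k. (x / 2) ^ (2 * k + n) / (fact k * fact (k + n)))"

definition Phi :: "real \<Rightarrow> real" where
  "Phi x = exp (- x) * (besselI 0 x + besselI 1 x)"

end

theory Submission
  imports Defs
begin

text \<open>
  By Legendre's duplication formula, \<pi> times the right-hand side is the Beta integral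
  B(1/2, r + 1/2) = \<integral>[0,1] s^(-1/2) (1 - s)^(r - 1/2) ds. The substitution s = sin(\<beta> t)^2,
  where \<beta> t = (t + sin t) / 2 is mean_angle below, turns it into
  \<integral>[0,\<pi>] cos(\<beta> t)^(2r) (1 + cos t) dt, and the elementary inequality
  cos(\<beta> t) \<le> exp(cos t - 1) bounds this by
  \<integral>[0,\<pi>] exp(-2r (1 - cos t)) (1 + cos t) dt. Expanding the exponential and integrating the
  even powers of cos termwise, again as Beta integrals, identifies the last integral with \<pi> \<Phi>(2r).
\<close>

section \<open>Duplication formula and half-integer Beta values\<close>

definition central_binomial_ratio :: "real \<Rightarrow> real" where
  "central_binomial_ratio x = Gamma (2 * x + 1) / (Gamma (x + 1))\<^sup>2 * 2 powr (- 2 * x)"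

lemma Gamma_legendre_duplication_real:
  fixes z :: real
  assumes "z > 0"
  shows "Gamma z * Gamma (z + 1/2) = 2 powr (1 - 2 * z) * sqrt pi * Gamma (2 * z)"
proof -
  have not_pole: "complex_of_real y \<notin> \<int>\<^sub>\<le>\<^sub>0" if "y > 0" for y
    using that by (auto simp: of_real_in_nonpos_Ints_iff)
  have "Gamma (of_real z) * Gamma (of_real z + 1/2)
      = exp ((1 - 2 * of_real z) * of_real (ln 2)) * of_real (sqrt pi) * Gamma (2 * complex_of_real z)"
    using assms not_pole[of z] not_pole[of "z + 1/2"] by (intro Gamma_legendre_duplication) auto
  then have "complex_of_real (Gamma z * Gamma (z + 1/2))
      = complex_of_real (exp ((1 - 2 * z) * ln 2) * sqrt pi * Gamma (2 * z))"
    by (simp flip: Gamma_complex_of_real exp_of_real)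
  then show ?thesis
    by (simp only: of_real_eq_iff) (simp add: powr_def)
qed

lemma central_binomial_ratio_pos: "x > -1/2 \<Longrightarrow> central_binomial_ratio x > 0"
  unfolding central_binomial_ratio_def by (intro mult_pos_pos divide_pos_pos zero_less_power Gamma_real_pos) auto

lemma central_binomial_ratio_of_nat:
  "central_binomial_ratio (real k) = fact (2 * k) / ((fact k)\<^sup>2 * 4 ^ k)"
proof -
  have "(2::real) powr (- 2 * real k) = inverse (2 ^ (2 * k))"
    by (simp add: powr_minus flip: powr_realpow)
  also have "\<dots> = inverse (4 ^ k)"
    by (simp add: power_mult)
  finally show ?thesis
    using Gamma_fact[of "2 * k", where 'a = real] Gamma_fact[of k, where 'a = real]
    by (simp add: central_binomial_ratio_def add_ac divide_inverse)
qed

lemma Beta_one_half: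
  fixes x :: real
  assumes "x > -1/2"
  shows "Beta (1/2) (x + 1/2) = pi * central_binomial_ratio x"
proof -
  have Gamma_pos: "Gamma (x + 1) > 0" using assms by simp
  have "Gamma (x + 1/2) * Gamma (x + 1) = 2 powr (- 2 * x) * sqrt pi * Gamma (2 * x + 1)"
    using Gamma_legendre_duplication_real[of "x + 1/2"] assms by (simp add: algebra_simps)
  then have "Gamma (x + 1/2) = 2 powr (- 2 * x) * sqrt pi * Gamma (2 * x + 1) / Gamma (x + 1)"
    using Gamma_pos by (simp add: field_simps)
  then have "Beta (1/2) (x + 1/2) = sqrt pi * sqrt pi * (Gamma (2 * x + 1) / (Gamma (x + 1))\<^sup>2 * 2 powr (- 2 * x))"
    using Gamma_pos by (simp add: Beta_def Gamma_one_half_real add_ac power2_eq_square)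
  then show ?thesis
    by (simp add: central_binomial_ratio_def)
qed

section \<open>Beta integrals over quarter periods\<close>

definition beta_kernel :: "real \<Rightarrow> real \<Rightarrow> real \<Rightarrow> real" where
  "beta_kernel a b s = s powr (a - 1) * (1 - s) powr (b - 1)"

lemma beta_kernel_nonneg: "beta_kernel a b s \<ge> 0"
  by (simp add: beta_kernel_def)

lemma borel_measurable_beta_kernel [measurable]: "beta_kernel a b \<in> borel_measurable borel"
  unfolding beta_kernel_def by measurable

lemma nn_integral_beta_kernel:
  assumes "a > 0" "b > 0"
  shows "(\<integral>\<^sup>+ s. ennreal (beta_kernel a b s) * indicator {0..1} s \<partial>lborel) = ennreal (Beta a b)"
  using has_integral_Beta_real[OF assms]
  by (intro nn_integral_has_integral_lebesgue') (simp_all add: beta_kernel_nonneg beta_kernel_def [abs_def])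

lemma beta_kernel_half_sin_sq:
  assumes "0 < u" "u < pi / 2"
  shows "beta_kernel (1/2) b ((sin u)\<^sup>2) * (2 * sin u * cos u) = 2 * cos u powr (2 * b - 1)"
proof -
  have sin_pos: "sin u > 0" and cos_pos: "cos u > 0"
    using assms by (auto intro: sin_gt_zero cos_gt_zero)
  have sq_powr: "(y\<^sup>2) powr c = y powr (2 * c)" if "y > 0" for y c :: real
  proof -
    have "y\<^sup>2 = y powr 2" using that by (simp add: powr_realpow)
    then show ?thesis by (simp only: powr_powr)
  qed
  have "beta_kernel (1/2) b ((sin u)\<^sup>2) = (sin u)\<^sup>2 powr (- 1 / 2) * (cos u)\<^sup>2 powr (b - 1)"
    by (simp add: beta_kernel_def cos_squared_eq)
  also have "\<dots> = sin u powr (- 1) * cos u powr (2 * b - 2)"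
    by (simp only: sq_powr sin_pos cos_pos) (simp add: algebra_simps)
  also have "\<dots> * (2 * sin u * cos u) = 2 * (sin u powr (- 1) * sin u powr 1) * (cos u powr (2 * b - 2) * cos u powr 1)"
    using sin_pos cos_pos by simp
  also have "\<dots> = 2 * cos u powr (2 * b - 1)"
    using sin_pos by (simp only: powr_add [symmetric]) simp
  finally show ?thesis .
qed

lemma nn_integral_beta_kernel_sin_sq_subst:
  fixes g g' :: "real \<Rightarrow> real"
  assumes "b > 0" "p < q" "g p = 0" "g q = pi / 2"
    and range: "\<And>t. t \<in> {p..q} \<Longrightarrow> 0 \<le> g t \<and> g t \<le> pi / 2"
    and deriv: "\<And>t. t \<in> {p..q} \<Longrightarrow> (g has_real_derivative g' t) (at t)"
    and cont: "continuous_on {p..q} g'"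
    and nonneg: "\<And>t. t \<in> {p..q} \<Longrightarrow> g' t \<ge> 0"
  shows "ennreal (Beta (1/2) b) = (\<integral>\<^sup>+ t. ennreal (beta_kernel (1/2) b ((sin (g t))\<^sup>2)
            * (2 * sin (g t) * cos (g t) * g' t)) * indicator {p..q} t \<partial>lborel)"
proof -
  let ?G = "\<lambda>t. (sin (g t))\<^sup>2" and ?G' = "\<lambda>t. 2 * sin (g t) * cos (g t) * g' t"
  have G'_nonneg: "?G' t \<ge> 0" if "t \<in> {p..q}" for t
    using range[OF that] nonneg[OF that] by (auto intro!: mult_nonneg_nonneg sin_ge_zero cos_ge_zero)
  have "continuous_on {p..q} g"
    using deriv by (rule has_real_derivative_imp_continuous_on)
  then have "continuous_on {p..q} ?G'"
    using cont by (intro continuous_intros) auto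
  moreover have "(?G has_real_derivative ?G' t) (at t)" if "t \<in> {p..q}" for t
    using deriv[OF that] by (auto intro!: derivative_eq_intros simp: power2_eq_square)
  ultimately have "(\<integral>\<^sup>+ s. ennreal (beta_kernel (1/2) b s) * indicator {?G p..?G q} s \<partial>lborel)
      = (\<integral>\<^sup>+ t. ennreal (beta_kernel (1/2) b (?G t)) * ennreal (?G' t) * indicator {p..q} t \<partial>lborel)"
    using G'_nonneg \<open>p < q\<close> by (intro nn_integral_substitution_aux) auto
  also have "\<dots> = (\<integral>\<^sup>+ t. ennreal (beta_kernel (1/2) b (?G t) * ?G' t) * indicator {p..q} t \<partial>lborel)"
    using G'_nonneg by (intro nn_integral_cong) (auto simp: indicator_def ennreal_mult'')
  finally show ?thesis
    using \<open>g p = 0\<close> \<open>g q = pi / 2\<close> \<open>b > 0\<close> by (simp add: nn_integral_beta_kernel)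
qed

lemma nn_integral_cos_power_even:
  "(\<integral>\<^sup>+ t. ennreal (2 * cos t ^ (2 * k)) * indicator {0..pi / 2} t \<partial>lborel)
     = ennreal (pi * central_binomial_ratio (real k))"
proof -
  have "ennreal (pi * central_binomial_ratio (real k)) = ennreal (Beta (1/2) (real k + 1/2))"
    by (simp add: Beta_one_half)
  also have "\<dots> = (\<integral>\<^sup>+ t. ennreal (beta_kernel (1/2) (real k + 1/2) ((sin t)\<^sup>2)
            * (2 * sin t * cos t * 1)) * indicator {0..pi / 2} t \<partial>lborel)"
    by (rule nn_integral_beta_kernel_sin_sq_subst) (auto intro!: derivative_eq_intros)
  also have "\<dots> = (\<integral>\<^sup>+ t. ennreal (2 * cos t ^ (2 * k)) * indicator {0..pi / 2} t \<partial>lborel)"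
  proof (rule nn_integral_cong_AE)
    show "AE t in lborel. ennreal (beta_kernel (1/2) (real k + 1/2) ((sin t)\<^sup>2) * (2 * sin t * cos t * 1))
        * indicator {0..pi / 2} t = ennreal (2 * cos t ^ (2 * k)) * indicator {0..pi / 2} t"
      using AE_lborel_singleton[of 0] AE_lborel_singleton[of "pi / 2"]
    proof eventually_elim
      case (elim t)
      show ?case
      proof (cases "t \<in> {0..pi / 2}")
        case True
        then have "0 < t" "t < pi / 2"
          using elim by auto
        then have "beta_kernel (1/2) (real k + 1/2) ((sin t)\<^sup>2) * (2 * sin t * cos t * 1)
            = 2 * cos t powr real (2 * k)"
          by (simp only: mult_1_right beta_kernel_half_sin_sq) (simp add: algebra_simps)
        also have "\<dots> = 2 * cos t ^ (2 * k)"
          using \<open>0 < t\<close> \<open>t < pi / 2\<close> cos_gt_zero[of t] by (simp only: powr_realpow)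
        finally show ?thesis
          by (simp only:)
      qed simp
    qed
  qed
  finally show ?thesis ..
qed

section \<open>The mean angle\<close>

lemma x_cos_le_sin:
  fixes x :: real
  assumes "0 \<le> x" "x \<le> pi"
  shows "x * cos x \<le> sin x"
proof -
  let ?f = "\<lambda>y::real. sin y - y * cos y"
  have "?f 0 \<le> ?f x"
  proof (rule DERIV_nonneg_imp_nondecreasing[OF assms(1)])
    fix y assume y: "0 \<le> y" "y \<le> x"
    have "(?f has_real_derivative y * sin y) (at y)"
      by (auto intro!: derivative_eq_intros simp: algebra_simps)
    moreover have "y * sin y \<ge> 0"
      using y assms by (intro mult_nonneg_nonneg sin_ge_zero) auto
    ultimately show "\<exists>d. (?f has_real_derivative d) (at y) \<and> d \<ge> 0" by blast
  qed
  then show ?thesis by simp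
qed

definition mean_angle :: "real \<Rightarrow> real" where
  "mean_angle t = (t + sin t) / 2"

lemma mean_angle_has_real_derivative:
  "(mean_angle has_real_derivative (1 + cos t) / 2) (at t)"
  unfolding mean_angle_def [abs_def] by (auto intro!: derivative_eq_intros)

lemma mean_angle_bounds:
  assumes "0 \<le> t" "t \<le> pi"
  shows "0 \<le> mean_angle t" "mean_angle t \<le> pi / 2"
proof -
  show "0 \<le> mean_angle t"
    using assms sin_ge_zero[of t] by (simp add: mean_angle_def)
  have "sin (pi - t) \<le> pi - t"
    using assms by (intro sin_x_le_x) simp
  then show "mean_angle t \<le> pi / 2"
    by (simp add: mean_angle_def)
qed

lemma sin_mul_cos_mean_angle_le:
  assumes "0 \<le> t" "t \<le> pi"
  shows "sin t * cos (mean_angle t) \<le> sin (mean_angle t) * (1 + cos t) / 2"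
proof -
  define u where "u = t / 2"
  define v where "v = sin u * cos u"
  have u: "0 \<le> u" "u \<le> pi / 2"
    using assms by (auto simp: u_def)
  have sin_cos_u: "sin u \<ge> 0" "cos u \<ge> 0"
    using u by (auto intro!: sin_ge_zero cos_ge_zero)
  have v: "0 \<le> v" "v \<le> pi"
  proof -
    show "0 \<le> v" using sin_cos_u by (simp add: v_def)
    have "v \<le> 1"
      unfolding v_def using sin_le_one[of u] cos_le_one[of u] sin_cos_u by (intro mult_le_one) auto
    then show "v \<le> pi" using pi_gt3 by linarith
  qed
  have "sin u * cos u * cos v \<le> sin v"
    using x_cos_le_sin[OF v] by (simp add: v_def)
  also have "\<dots> \<le> sin v * (1 + (sin u)\<^sup>2)"
    using sin_ge_zero[OF v] mult_left_mono[of 1 "1 + (sin u)\<^sup>2" "sin v"] by simp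
  finally have "0 \<le> cos u * (sin v * (1 + (sin u)\<^sup>2) - sin u * cos u * cos v)"
    using sin_cos_u by simp
  also have "\<dots> = (sin u * cos v + cos u * sin v) * (cos u)\<^sup>2 - 2 * sin u * cos u * (cos u * cos v - sin u * sin v)"
    using sin_cos_squared_add[of u] by algebra
  also have "\<dots> = sin (mean_angle t) * (1 + cos t) / 2 - sin t * cos (mean_angle t)"
  proof -
    have t: "t = 2 * u" by (simp add: u_def)
    have "mean_angle t = u + v"
      by (simp add: mean_angle_def v_def t sin_double)
    then show ?thesis
      by (simp add: sin_add cos_add t sin_double cos_double_cos)
  qed
  finally show ?thesis by simp
qed

lemma cos_mean_angle_le_exp:
  assumes "0 \<le> t" "t \<le> pi"
  shows "cos (mean_angle t) \<le> exp (cos t - 1)"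
proof -
  let ?f = "\<lambda>x. cos (mean_angle x) * exp (1 - cos x)"
  have "?f t \<le> ?f 0"
  proof (rule DERIV_nonpos_imp_nonincreasing[OF assms(1)])
    fix x assume x: "0 \<le> x" "x \<le> t"
    have "(?f has_real_derivative
        exp (1 - cos x) * (sin x * cos (mean_angle x) - sin (mean_angle x) * (1 + cos x) / 2)) (at x)"
      by (auto intro!: derivative_eq_intros mean_angle_has_real_derivative simp: field_simps)
    moreover have "exp (1 - cos x) * (sin x * cos (mean_angle x) - sin (mean_angle x) * (1 + cos x) / 2) \<le> 0"
      using sin_mul_cos_mean_angle_le[of x] x assms by (intro mult_nonneg_nonpos) auto
    ultimately show "\<exists>d. (?f has_real_derivative d) (at x) \<and> d \<le> 0" by blast
  qed
  then have "cos (mean_angle t) * exp (1 - cos t) \<le> exp (cos t - 1) * exp (1 - cos t)"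
    by (simp add: mean_angle_def flip: exp_add)
  then show ?thesis
    by (rule mult_right_le_imp_le) simp
qed

section \<open>Integral representation of \<open>\<Phi>\<close>\<close>

definition Phi_kernel :: "real \<Rightarrow> real \<Rightarrow> real" where
  "Phi_kernel x t = exp (- x * (1 - cos t)) * (1 + cos t)"

lemma Phi_kernel_nonneg: "Phi_kernel x t \<ge> 0"
proof -
  have "0 \<le> 1 + cos t"
    using cos_ge_minus_one[of t] by linarith
  then show ?thesis
    unfolding Phi_kernel_def by simp
qed

lemma borel_measurable_Phi_kernel [measurable]: "Phi_kernel x \<in> borel_measurable borel"
  unfolding Phi_kernel_def by measurable

lemma Phi_kernel_reflect_sums:
  "(\<lambda>m. exp (- x) * (x ^ m / fact m) * (2 * cos t ^ (2 * ((m + 1) div 2))))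
     sums (Phi_kernel x t + Phi_kernel x (pi - t))"
proof -
  define c where "c = cos t"
  have "exp (- x) * (1 + c) * ((x * c) ^ m / fact m) + exp (- x) * (1 - c) * ((- (x * c)) ^ m / fact m)
      = exp (- x) * (x ^ m / fact m) * (2 * c ^ (2 * ((m + 1) div 2)))" for m
  proof (cases "even m")
    case True
    then have "2 * ((m + 1) div 2) = m" by auto
    with True show ?thesis by (simp add: power_mult_distrib field_simps)
  next
    case False
    then have "2 * ((m + 1) div 2) = Suc m" by auto
    with False show ?thesis by (simp add: power_mult_distrib field_simps)
  qed
  moreover have "(\<lambda>m. exp (- x) * (1 + c) * ((x * c) ^ m / fact m) + exp (- x) * (1 - c) * ((- (x * c)) ^ m / fact m))
      sums (exp (- x) * (1 + c) * exp (x * c) + exp (- x) * (1 - c) * exp (- (x * c)))"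
    using exp_converges[of "x * c"] exp_converges[of "- (x * c)"]
    by (intro sums_add sums_mult) (simp_all add: divide_inverse mult.commute)
  moreover have "exp (- x) * (1 + c) * exp (x * c) + exp (- x) * (1 - c) * exp (- (x * c))
      = Phi_kernel x t + Phi_kernel x (pi - t)"
    by (simp add: Phi_kernel_def c_def algebra_simps flip: exp_add)
  ultimately show ?thesis
    by (simp add: c_def)
qed

lemma summable_besselI_series:
  fixes x :: real
  shows "summable (\<lambda>k. (x / 2) ^ (2 * k + n) / (fact k * fact (k + n)))"
proof -
  define y where "y = x / 2"
  have "norm (y ^ (2 * k + n) / (fact k * fact (k + n))) \<le> \<bar>y\<bar> ^ n * (inverse (fact k) * (y\<^sup>2) ^ k)"
    for k :: nat
  proof -
    have "y ^ (2 * k + n) = (y\<^sup>2) ^ k * y ^ n"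
      by (simp add: power_add power_mult)
    then have "norm (y ^ (2 * k + n) / (fact k * fact (k + n))) = (y\<^sup>2) ^ k * \<bar>y\<bar> ^ n / (fact k * fact (k + n))"
      by (simp add: abs_mult power_abs)
    also have "\<dots> \<le> (y\<^sup>2) ^ k * \<bar>y\<bar> ^ n / fact k"
      by (intro divide_left_mono) (auto simp: fact_ge_1)
    finally show ?thesis
      by (simp add: divide_inverse mult_ac)
  qed
  then have "summable (\<lambda>k. y ^ (2 * k + n) / (fact k * fact (k + n)))"
    by (intro summable_comparison_test[OF _ summable_mult[OF summable_exp]]) auto
  then show ?thesis
    by (simp add: y_def)
qed

lemma besselI_sums:
  fixes x :: real
  shows "(\<lambda>k. (x / 2) ^ (2 * k + n) / (fact k * fact (k + n))) sums besselI n x"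
  unfolding besselI_def by (rule summable_sums[OF summable_besselI_series])

lemma central_binomial_ratio_even_term:
  "x ^ (2 * k) / fact (2 * k) * central_binomial_ratio (real k) = (x / 2) ^ (2 * k) / (fact k * fact k)"
proof -
  have "(4::real) ^ k = 2 ^ (2 * k)"
    by (simp add: power_mult)
  then show ?thesis
    by (simp add: central_binomial_ratio_of_nat power_divide power2_eq_square)
qed

lemma central_binomial_ratio_odd_term:
  fixes x :: real
  shows "x ^ (2 * k + 1) / fact (2 * k + 1) * central_binomial_ratio (real (k + 1))
     = (x / 2) ^ (2 * k + 1) / (fact k * fact (k + 1))"
proof -
  define F G P X where "F = (fact k :: real)" and "G = (fact (2 * k + 1) :: real)"
    and "P = (4 :: real) ^ k" and "X = x ^ (2 * k + 1)"
  define K where "K = real k + 1"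
  have pos: "F > 0" "G > 0" "P > 0" "K > 0"
    by (simp_all add: F_def G_def P_def K_def)
  have fact_double: "fact (2 * (k + 1)) = 2 * K * G"
    by (simp add: G_def K_def algebra_simps)
  have fact_Suc: "fact (k + 1) = K * F"
    by (simp add: F_def K_def)
  have four_pow: "(4::real) ^ (k + 1) = 4 * P"
    by (simp add: P_def)
  have half_pow: "(x / 2) ^ (2 * k + 1) = X / (2 * P)"
    by (simp add: P_def X_def power_divide power_mult)
  show ?thesis
    unfolding central_binomial_ratio_of_nat fact_double fact_Suc four_pow half_pow
      F_def [symmetric] G_def [symmetric] X_def [symmetric]
    using pos by (simp add: field_simps power2_eq_square)
qed

lemma besselI_0_plus_1_sums:
  "(\<lambda>m. x ^ m / fact m * central_binomial_ratio (real ((m + 1) div 2))) sums (besselI 0 x + besselI 1 x)"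
proof -
  define b where "b n k = (x / 2) ^ (2 * k + n) / (fact k * fact (k + n))" for n k
  have "(if even m then b 0 (m div 2) else b 1 ((m - 1) div 2))
      = x ^ m / fact m * central_binomial_ratio (real ((m + 1) div 2))" for m
  proof (cases "even m")
    case True
    then obtain k where "m = 2 * k" by (rule evenE)
    then show ?thesis using central_binomial_ratio_even_term[of x k] by (simp add: b_def)
  next
    case False
    then obtain k where "m = 2 * k + 1" by (rule oddE)
    then show ?thesis using central_binomial_ratio_odd_term[of x k] by (simp add: b_def)
  qed
  moreover have "(\<lambda>m. if even m then b 0 (m div 2) else b 1 ((m - 1) div 2)) sums (besselI 1 x + besselI 0 x)"
    unfolding b_def by (intro sums_if besselI_sums)
  ultimately show ?thesis
    by (simp add: add.commute)
qed

lemma beta_kernel_mean_angle_le_Phi_kernel: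
  assumes "r \<ge> 0" "0 \<le> t" "t \<le> pi"
  shows "beta_kernel (1/2) (r + 1/2) ((sin (mean_angle t))\<^sup>2)
           * (2 * sin (mean_angle t) * cos (mean_angle t) * ((1 + cos t) / 2))
         \<le> Phi_kernel (2 * r) t"
proof -
  define u where "u = mean_angle t"
  have "0 \<le> u" "u \<le> pi / 2"
    using mean_angle_bounds[OF assms(2,3)] by (simp_all add: u_def)
  then consider "u = 0 \<or> u = pi / 2" | "0 < u" "u < pi / 2"
    by linarith
  then show ?thesis
  proof cases
    case 1
    then have "2 * sin u * cos u * ((1 + cos t) / 2) = 0"
      by (metis cos_pi_half mult_zero_left mult_zero_right sin_zero)
    then have "beta_kernel (1/2) (r + 1/2) ((sin u)\<^sup>2) * (2 * sin u * cos u * ((1 + cos t) / 2)) = 0"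
      by (simp only: mult_zero_right)
    then show ?thesis
      using Phi_kernel_nonneg[of "2 * r" t] unfolding u_def by linarith
  next
    case 2
    have "0 \<le> 1 + cos t"
      using cos_ge_minus_one[of t] by linarith
    have "beta_kernel (1/2) (r + 1/2) ((sin u)\<^sup>2) * (2 * sin u * cos u * ((1 + cos t) / 2))
        = (beta_kernel (1/2) (r + 1/2) ((sin u)\<^sup>2) * (2 * sin u * cos u)) * ((1 + cos t) / 2)"
      by (simp only: mult.assoc)
    also have "\<dots> = 2 * cos u powr (2 * (r + 1/2) - 1) * ((1 + cos t) / 2)"
      by (simp only: beta_kernel_half_sin_sq[OF 2])
    also have "\<dots> = cos u powr (2 * r) * (1 + cos t)"
      by simp
    also have "\<dots> \<le> exp (cos t - 1) powr (2 * r) * (1 + cos t)"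
      using 2 cos_mean_angle_le_exp[OF assms(2,3)] \<open>0 \<le> 1 + cos t\<close> \<open>r \<ge> 0\<close>
      by (intro mult_right_mono powr_mono2) (auto simp: u_def intro: cos_ge_zero)
    also have "\<dots> = Phi_kernel (2 * r) t"
      by (simp add: Phi_kernel_def exp_powr_real algebra_simps)
    finally show ?thesis
      by (simp add: u_def)
  qed
qed

lemma Beta_le_nn_integral_Phi_kernel:
  assumes "r \<ge> 0"
  shows "ennreal (Beta (1/2) (r + 1/2)) \<le> (\<integral>\<^sup>+ t. ennreal (Phi_kernel (2 * r) t) * indicator {0..pi} t \<partial>lborel)"
proof -
  have "0 \<le> 1 + cos t" for t :: real
    using cos_ge_minus_one[of t] by linarith
  then have "ennreal (Beta (1/2) (r + 1/2)) = (\<integral>\<^sup>+ t. ennreal (beta_kernel (1/2) (r + 1/2) ((sin (mean_angle t))\<^sup>2)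
           * (2 * sin (mean_angle t) * cos (mean_angle t) * ((1 + cos t) / 2))) * indicator {0..pi} t \<partial>lborel)"
    using assms mean_angle_bounds
    by (intro nn_integral_beta_kernel_sin_sq_subst mean_angle_has_real_derivative continuous_intros)
       (auto simp: mean_angle_def)
  also have "\<dots> \<le> (\<integral>\<^sup>+ t. ennreal (Phi_kernel (2 * r) t) * indicator {0..pi} t \<partial>lborel)"
    using beta_kernel_mean_angle_le_Phi_kernel[OF assms]
    by (intro nn_integral_mono) (auto simp: indicator_def intro!: ennreal_leI)
  finally show ?thesis .
qed

lemma nn_integral_fold_at_midpoint:
  fixes f :: "real \<Rightarrow> ennreal"
  assumes [measurable]: "f \<in> borel_measurable borel"
  shows "(\<integral>\<^sup>+ t. f t * indicator {a..b} t \<partial>lborel)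
       = (\<integral>\<^sup>+ t. (f t + f (a + b - t)) * indicator {a..(a + b) / 2} t \<partial>lborel)"
proof -
  let ?m = "(a + b) / 2"
  have "(\<integral>\<^sup>+ t. f t * indicator {a..b} t \<partial>lborel)
      = (\<integral>\<^sup>+ t. f t * indicator {a..?m} t + f t * indicator {?m..b} t \<partial>lborel)"
    using AE_lborel_singleton[of ?m]
    by (intro nn_integral_cong_AE, eventually_elim) (auto simp: indicator_def)
  also have "\<dots> = (\<integral>\<^sup>+ t. f t * indicator {a..?m} t \<partial>lborel) + (\<integral>\<^sup>+ t. f t * indicator {?m..b} t \<partial>lborel)"
    by (rule nn_integral_add) measurable
  also have "(\<integral>\<^sup>+ t. f t * indicator {?m..b} t \<partial>lborel) = (\<integral>\<^sup>+ t. f (a + b - t) * indicator {a..?m} t \<partial>lborel)"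
    by (subst nn_integral_real_affine[where c = "-1" and t = "a + b"])
       (auto simp: indicator_def intro!: nn_integral_cong)
  also have "(\<integral>\<^sup>+ t. f t * indicator {a..?m} t \<partial>lborel) + (\<integral>\<^sup>+ t. f (a + b - t) * indicator {a..?m} t \<partial>lborel)
      = (\<integral>\<^sup>+ t. (f t + f (a + b - t)) * indicator {a..?m} t \<partial>lborel)"
    by (subst nn_integral_add [symmetric]) (auto simp: distrib_right)
  finally show ?thesis .
qed

lemma nn_integral_Phi_kernel:
  assumes "x \<ge> 0"
  shows "(\<integral>\<^sup>+ t. ennreal (Phi_kernel x t) * indicator {0..pi} t \<partial>lborel) = ennreal (pi * Phi x)"
proof -
  define w where "w m = exp (- x) * (x ^ m / fact m)" for m
  define k where "k m = (m + 1) div 2" for m :: nat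
  have w_nonneg: "w m \<ge> 0" for m
    using assms by (simp add: w_def)
  have term_integral: "(\<integral>\<^sup>+ t. ennreal (w m * (2 * cos t ^ (2 * k m))) * indicator {0..pi / 2} t \<partial>lborel)
      = ennreal (w m * (pi * central_binomial_ratio (real (k m))))" for m
  proof -
    have "(\<integral>\<^sup>+ t. ennreal (w m * (2 * cos t ^ (2 * k m))) * indicator {0..pi / 2} t \<partial>lborel)
        = (\<integral>\<^sup>+ t. ennreal (w m) * (ennreal (2 * cos t ^ (2 * k m)) * indicator {0..pi / 2} t) \<partial>lborel)"
      using w_nonneg[of m] by (simp add: ennreal_mult' mult.assoc)
    also have "\<dots> = ennreal (w m) * (\<integral>\<^sup>+ t. ennreal (2 * cos t ^ (2 * k m)) * indicator {0..pi / 2} t \<partial>lborel)"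
      by (rule nn_integral_cmult) measurable
    also have "\<dots> = ennreal (w m * (pi * central_binomial_ratio (real (k m))))"
      unfolding nn_integral_cos_power_even using w_nonneg[of m] by (simp add: ennreal_mult')
    finally show ?thesis .
  qed
  \<comment> \<open>Folding \<open>[0, \<pi>]\<close> onto \<open>[0, \<pi>/2]\<close> cancels the odd powers of \<open>cos t\<close>, so the series
    below has nonnegative terms and can be integrated termwise.\<close>
  have "(\<integral>\<^sup>+ t. ennreal (Phi_kernel x t) * indicator {0..pi} t \<partial>lborel)
      = (\<integral>\<^sup>+ t. ennreal (Phi_kernel x t + Phi_kernel x (pi - t)) * indicator {0..pi / 2} t \<partial>lborel)"
    using nn_integral_fold_at_midpoint[of "\<lambda>t. ennreal (Phi_kernel x t)" 0 pi]
    by (simp add: Phi_kernel_nonneg ennreal_plus)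
  also have "\<dots> = (\<integral>\<^sup>+ t. (\<Sum>m. ennreal (w m * (2 * cos t ^ (2 * k m))) * indicator {0..pi / 2} t) \<partial>lborel)"
  proof (intro nn_integral_cong)
    fix t :: real
    have "0 \<le> w m * (2 * cos t ^ (2 * k m))" for m
      using w_nonneg[of m] by (simp add: power_mult)
    moreover have "(\<lambda>m. w m * (2 * cos t ^ (2 * k m))) sums (Phi_kernel x t + Phi_kernel x (pi - t))"
      unfolding w_def k_def by (rule Phi_kernel_reflect_sums)
    ultimately have "(\<Sum>m. ennreal (w m * (2 * cos t ^ (2 * k m)))) = ennreal (Phi_kernel x t + Phi_kernel x (pi - t))"
      by (rule suminf_ennreal_eq)
    then show "ennreal (Phi_kernel x t + Phi_kernel x (pi - t)) * indicator {0..pi / 2} t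
        = (\<Sum>m. ennreal (w m * (2 * cos t ^ (2 * k m))) * indicator {0..pi / 2} t)"
      by (simp only: ennreal_suminf_multc)
  qed
  also have "\<dots> = (\<Sum>m. \<integral>\<^sup>+ t. ennreal (w m * (2 * cos t ^ (2 * k m))) * indicator {0..pi / 2} t \<partial>lborel)"
    by (rule nn_integral_suminf) measurable
  also have "\<dots> = (\<Sum>m. ennreal (w m * (pi * central_binomial_ratio (real (k m)))))"
    by (simp only: term_integral)
  also have "\<dots> = ennreal (pi * Phi x)"
  proof (rule suminf_ennreal_eq)
    show "0 \<le> w m * (pi * central_binomial_ratio (real (k m)))" for m
      using w_nonneg[of m] central_binomial_ratio_pos[of "real (k m)"] by simp
    show "(\<lambda>m. w m * (pi * central_binomial_ratio (real (k m)))) sums (pi * Phi x)"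
      using sums_mult[OF besselI_0_plus_1_sums[of x], of "pi * exp (- x)"]
      by (simp add: w_def k_def Phi_def mult_ac)
  qed
  finally show ?thesis .
qed

theorem theorem3:
  fixes r :: real
  assumes "r \<ge> 0"
  shows "Phi (2 * r) = exp (- 2 * r) * (besselI 0 (2 * r) + besselI 1 (2 * r))
       \<and> Phi (2 * r) \<ge> Gamma (2 * r + 1) / (Gamma (r + 1))\<^sup>2 * 2 powr (- 2 * r)"
proof
  show "Phi (2 * r) = exp (- 2 * r) * (besselI 0 (2 * r) + besselI 1 (2 * r))"
    by (simp add: Phi_def)
  have "ennreal (pi * central_binomial_ratio r) = ennreal (Beta (1/2) (r + 1/2))"
    using assms by (simp add: Beta_one_half)
  also have "\<dots> \<le> (\<integral>\<^sup>+ t. ennreal (Phi_kernel (2 * r) t) * indicator {0..pi} t \<partial>lborel)"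
    using assms by (rule Beta_le_nn_integral_Phi_kernel)
  also have "\<dots> = ennreal (pi * Phi (2 * r))"
    using assms by (simp add: nn_integral_Phi_kernel)
  finally have "ennreal (pi * central_binomial_ratio r) \<le> ennreal (pi * Phi (2 * r))" .
  moreover have "pi * central_binomial_ratio r > 0"
    using central_binomial_ratio_pos[of r] assms by simp
  ultimately have "pi * central_binomial_ratio r \<le> pi * Phi (2 * r)"
    unfolding ennreal_le_iff2 by linarith
  then have "central_binomial_ratio r \<le> Phi (2 * r)"
    by simp
  then show "Phi (2 * r) \<ge> Gamma (2 * r + 1) / (Gamma (r + 1))\<^sup>2 * 2 powr (- 2 * r)"
    unfolding central_binomial_ratio_def .
qed

end
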